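(* For every positive integer $n$, the number of ordered set partitions of $[n]$ into exactly $3$ blocks that avoid the pattern $132$ is $$\operatorname{op}_{n,3}(132) = \left(\frac{n^2}{8}+\frac{3n}{8}-2\right)2^n+3.$$
   Context: An ordered set partition of $[n]$ into $k$ blocks is a sequence $B_1/B_2/\cdots/B_k$ of nonempty, pairwise disjoint subsets of $[n]$ whose union is $[n]$; the order of the blocks matters, but not the order of elements within a block. For a permutation $\rho=\rho_1\cdots\rho_m\in\mathcal{S}_m$, an ordered partition $B_1/\cdots/B_k$ contains $\rho$ if there are block indices $i_1<i_2<\cdots<i_m$ and elements $b_j\in B_{i_j}$ such that $b_1\cdots b_m$ is order-isomorphic to $\rho$ (i.e. $b_a<b_c$ iff $\rho_a<\rho_c$); otherwise it avoids $\rho$. $\operatorname{op}_{n,k}(\rho)$ denotes the number of ordered partitions of $[n]$ into $k$ blocks that avoid $\rho$. *)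

theory Defs
  imports Main Complex_Main
begin

definition ordered_partition :: "nat \<Rightarrow> nat \<Rightarrow> nat set list \<Rightarrow> bool" where
  "ordered_partition n k bs \<longleftrightarrow>
     length bs = k \<and>
     (\<forall>i<k. bs ! i \<noteq> {}) \<and>
     (\<forall>i<k. \<forall>j<k. i \<noteq> j \<longrightarrow> bs ! i \<inter> bs ! j = {}) \<and>
     (\<Union>i<k. bs ! i) = {1..n}"

definition contains_pattern :: "nat set list \<Rightarrow> nat list \<Rightarrow> bool" where
  "contains_pattern bs rho \<longleftrightarrow>
     (\<exists>idx b :: nat \<Rightarrow> nat.
        (\<forall>a c. a < c \<and> c < length rho \<longrightarrow> idx a < idx c) \<and>
        (\<forall>a < length rho. idx a < length bs \<and> b a \<in> bs ! idx a) \<and>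
        (\<forall>a < length rho. \<forall>c < length rho. (b a < b c \<longleftrightarrow> rho ! a < rho ! c)))"

definition op_count :: "nat \<Rightarrow> nat \<Rightarrow> nat list \<Rightarrow> nat" where
  "op_count n k rho = card {bs. ordered_partition n k bs \<and> \<not> contains_pattern bs rho}"

end

theory Submission
  imports Defs "HOL-Library.Sublist"
begin

text \<open>Recording for each element of \<open>[n]\<close> the index of its block turns an ordered partition into
  3 blocks into a surjective word of length \<open>n\<close> over \<open>{0,1,2}\<close>, and an occurrence of 132 becomes
  an occurrence of \<open>0 2 1\<close> as a subsequence. Splitting off the first letter, words over a
  \<open>q\<close>-letter alphabet avoiding \<open>a # u\<close> satisfy \<open>A(a # u, n + 1) = A(u, n) + (q - 1) A(a # u, n)\<close>,
  which yields \<open>(n\<^sup>2 + 3n + 8) 2\<^sup>n / 8\<close> words avoiding \<open>0 2 1\<close>. The \<open>3 \<cdot> 2\<^sup>n - 3\<close>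
  non-surjective words avoid it trivially and are subtracted.\<close>

definition words :: "'a set \<Rightarrow> nat \<Rightarrow> 'a list set" where
  "words A n = {w. set w \<subseteq> A \<and> length w = n}"

lemma finite_words: "finite A \<Longrightarrow> finite (words A n)"
  unfolding words_def by (rule finite_lists_length_eq)

lemma card_words: "finite A \<Longrightarrow> card (words A n) = card A ^ n"
  unfolding words_def by (rule card_lists_length_eq)

lemma words_Int: "words A n \<inter> words B n = words (A \<inter> B) n"
  unfolding words_def by blast

lemma card_words_Un:
  assumes "finite A" "finite B"
  shows "card (words A n \<union> words B n) + card (A \<inter> B) ^ n = card A ^ n + card B ^ n"
  using card_Un_Int[of "words A n" "words B n"] assms
  by (simp add: finite_words words_Int card_words)

definition avoiders :: "'a set \<Rightarrow> 'a list \<Rightarrow> nat \<Rightarrow> 'a list set" where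
  "avoiders A u n = {w \<in> words A n. \<not> subseq u w}"

lemma avoiders_Nil: "avoiders A [] n = {}"
  unfolding avoiders_def by simp

lemma avoiders_Cons_0: "avoiders A (a # u) 0 = {[]}"
  unfolding avoiders_def words_def by auto

lemma avoiders_Cons_Suc:
  assumes "a \<in> A"
  shows "avoiders A (a # u) (Suc n) =
    (#) a ` avoiders A u n \<union> (\<lambda>(x, w). x # w) ` ((A - {a}) \<times> avoiders A (a # u) n)"
proof (intro equalityI subsetI)
  fix w assume "w \<in> avoiders A (a # u) (Suc n)"
  then obtain x v where "w = x # v" "x \<in> A" "v \<in> words A n" "\<not> subseq (a # u) (x # v)"
    unfolding avoiders_def words_def by (cases w) auto
  then show "w \<in> (#) a ` avoiders A u n \<union> (\<lambda>(x, w). x # w) ` ((A - {a}) \<times> avoiders A (a # u) n)"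
    unfolding avoiders_def by (cases "x = a") auto
qed (use assms in \<open>auto simp: avoiders_def words_def\<close>)

lemma card_avoiders_Cons_Suc:
  assumes "finite A" "a \<in> A"
  shows "card (avoiders A (a # u) (Suc n)) =
    card (avoiders A u n) + (card A - 1) * card (avoiders A (a # u) n)"
proof -
  have fin: "finite (avoiders A v n)" for v
    unfolding avoiders_def using finite_words[OF assms(1)] by simp
  have "card ((#) a ` avoiders A u n) = card (avoiders A u n)"
    by (rule card_image) simp
  moreover have "card ((\<lambda>(x, w). x # w) ` ((A - {a}) \<times> avoiders A (a # u) n)) =
      (card A - 1) * card (avoiders A (a # u) n)"
    by (subst card_image) (auto simp: inj_on_def card_cartesian_product assms)
  ultimately show ?thesis
    unfolding avoiders_Cons_Suc[OF assms(2)]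
    by (subst card_Un_disjoint) (use fin assms(1) in auto)
qed

lemma card_avoiders_1: "card (avoiders {0, 1, 2 :: nat} [1] n) = 2 ^ n"
proof (induction n)
  case (Suc n)
  have "card (avoiders {0, 1, 2 :: nat} [1] (Suc n)) = 2 * card (avoiders {0, 1, 2 :: nat} [1] n)"
    by (subst card_avoiders_Cons_Suc) (simp_all add: avoiders_Nil)
  then show ?case
    by (simp only: Suc.IH power_Suc)
qed (simp add: avoiders_Cons_0)

lemma card_avoiders_21: "2 * card (avoiders {0, 1, 2 :: nat} [2, 1] n) = 2 ^ n * (n + 2)"
proof (induction n)
  case (Suc n)
  have "card (avoiders {0, 1, 2 :: nat} [2, 1] (Suc n)) =
      2 ^ n + 2 * card (avoiders {0, 1, 2 :: nat} [2, 1] n)"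
    by (subst card_avoiders_Cons_Suc) (simp_all only: card_avoiders_1, simp_all)
  then show ?case
    using Suc.IH by simp
qed (simp add: avoiders_Cons_0)

lemma card_avoiders_021:
  "8 * card (avoiders {0, 1, 2 :: nat} [0, 2, 1] n) = 2 ^ n * (n\<^sup>2 + 3 * n + 8)"
proof (induction n)
  case (Suc n)
  have "8 * card (avoiders {0, 1, 2 :: nat} [0, 2, 1] (Suc n)) =
      4 * (2 * card (avoiders {0, 1, 2 :: nat} [2, 1] n)) + 2 * (8 * card (avoiders {0, 1, 2 :: nat} [0, 2, 1] n))"
    by (subst card_avoiders_Cons_Suc) simp_all
  then show ?case
    by (simp only: Suc.IH card_avoiders_21) (simp add: algebra_simps power2_eq_square)
qed (simp add: avoiders_Cons_0)

lemma subseq_set_subset: "subseq xs ys \<Longrightarrow> set xs \<subseteq> set ys"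
  by (auto elim: list_emb_set)

lemma non_surjective_words: "{w \<in> words A n. set w \<noteq> A} = (\<Union>a\<in>A. words (A - {a}) n)"
  unfolding words_def by blast

lemma card_non_surjective_words:
  assumes "n \<ge> 1"
  shows "card {w \<in> words {0, 1, 2 :: nat} n. set w \<noteq> {0, 1, 2}} + 3 = 3 * 2 ^ n"
proof -
  let ?X = "words {1, 2 :: nat} n \<union> words {0, 2} n"
  have split: "{w \<in> words {0, 1, 2 :: nat} n. set w \<noteq> {0, 1, 2}} = ?X \<union> words {0, 1} n"
    unfolding non_surjective_words by (auto simp: insert_Diff_if)
  have "{1, 2 :: nat} \<inter> {0, 1} = {1}" "{0, 2 :: nat} \<inter> {0, 1} = {0}"
    by auto
  then have overlap: "?X \<inter> words {0, 1} n = words {1} n \<union> words {0} n"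
    by (simp only: Int_Un_distrib2 words_Int)
  have "card ?X + card (words {0, 1 :: nat} n) =
      card (?X \<union> words {0, 1} n) + card (?X \<inter> words {0, 1} n)"
    by (rule card_Un_Int) (simp_all add: finite_words)
  moreover have "card ?X + 1 = 2 * 2 ^ n"
    using card_words_Un[of "{1, 2 :: nat}" "{0, 2}" n] by (simp add: numeral_2_eq_2)
  moreover have "card (words {1 :: nat} n \<union> words {0} n) = 2"
    using card_words_Un[of "{1 :: nat}" "{0}" n] assms by (simp add: power_0_left)
  moreover have "card (words {0, 1 :: nat} n) = 2 ^ n"
    by (simp add: card_words numeral_2_eq_2)
  ultimately show ?thesis
    unfolding split overlap by linarith
qed

lemma card_surjective_avoiders_021:
  assumes "n \<ge> 1"
  shows "card {w \<in> avoiders {0, 1, 2 :: nat} [0, 2, 1] n. set w = {0, 1, 2}} + 3 * 2 ^ n =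
    card (avoiders {0, 1, 2 :: nat} [0, 2, 1] n) + 3"
proof -
  let ?A = "avoiders {0, 1, 2 :: nat} [0, 2, 1] n"
  let ?S = "{w \<in> ?A. set w = {0, 1, 2}}"
  let ?N = "{w \<in> words {0, 1, 2 :: nat} n. set w \<noteq> {0, 1, 2}}"
  have "?N \<subseteq> ?A"
    unfolding avoiders_def words_def by (auto dest!: subseq_set_subset)
  then have "?A = ?S \<union> ?N"
    unfolding avoiders_def by blast
  moreover have "finite ?S" "finite ?N"
    by (simp_all add: avoiders_def finite_words)
  ultimately have "card ?A = card ?S + card ?N"
    by (metis (no_types, lifting) card_Un_disjoint disjoint_iff mem_Collect_eq)
  then show ?thesis
    using card_non_surjective_words[OF assms] by simp
qed

definition blocks :: "nat \<Rightarrow> nat list \<Rightarrow> nat set list" where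
  "blocks k w = map (\<lambda>j. {Suc i | i. i < length w \<and> w ! i = j}) [0..<k]"

lemma length_blocks [simp]: "length (blocks k w) = k"
  unfolding blocks_def by simp

lemma mem_blocks: "j < k \<Longrightarrow> m \<in> blocks k w ! j \<longleftrightarrow> (\<exists>i<length w. m = Suc i \<and> w ! i = j)"
  unfolding blocks_def by auto

lemma ordered_partition_blocks:
  assumes "length w = n" "set w = {..<k}"
  shows "ordered_partition n k (blocks k w)"
  unfolding ordered_partition_def
proof (intro conjI allI impI)
  fix j assume "j < k"
  then obtain i where "i < length w" "w ! i = j"
    using assms(2) by (metis in_set_conv_nth lessThan_iff)
  then show "blocks k w ! j \<noteq> {}"
    using mem_blocks[OF \<open>j < k\<close>] by blast
next
  show "(\<Union>j<k. blocks k w ! j) = {1..n}"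
  proof (intro equalityI subsetI)
    fix m assume "m \<in> {1..n}"
    then obtain i where i: "m = Suc i" "i < length w"
      using assms(1) by (cases m) auto
    then have "w ! i < k"
      using assms(2) nth_mem by blast
    with i show "m \<in> (\<Union>j<k. blocks k w ! j)"
      by (auto simp: mem_blocks)
  qed (use assms(1) in \<open>auto simp: mem_blocks\<close>)
qed (auto simp: mem_blocks)

lemma inj_on_blocks: "inj_on (blocks k) (words {..<k} n)"
proof (rule inj_onI)
  fix v w assume v: "v \<in> words {..<k} n" and w: "w \<in> words {..<k} n" and eq: "blocks k v = blocks k w"
  show "v = w"
  proof (rule nth_equalityI)
    show "length v = length w"
      using v w by (simp add: words_def)
    fix i assume i: "i < length v"
    have "v ! i < k"
      using v i nth_mem by (fastforce simp: words_def)
    moreover have "Suc i \<in> blocks k v ! (v ! i)"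
      using i \<open>v ! i < k\<close> by (auto simp: mem_blocks)
    ultimately show "v ! i = w ! i"
      by (simp add: eq mem_blocks)
  qed
qed

lemma ordered_partition_block_subset:
  "ordered_partition n k bs \<Longrightarrow> j < k \<Longrightarrow> bs ! j \<subseteq> {1..n}"
  unfolding ordered_partition_def by blast

lemma ordered_partition_unique_block:
  "ordered_partition n k bs \<Longrightarrow> m \<in> {1..n} \<Longrightarrow> \<exists>!j. j < k \<and> m \<in> bs ! j"
  unfolding ordered_partition_def by blast

definition block_word :: "nat \<Rightarrow> nat \<Rightarrow> nat set list \<Rightarrow> nat list" where
  "block_word n k bs = map (\<lambda>i. THE j. j < k \<and> Suc i \<in> bs ! j) [0..<n]"

lemma length_block_word [simp]: "length (block_word n k bs) = n"
  by (simp add: block_word_def)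

lemma block_word_nth:
  assumes "ordered_partition n k bs" "i < n"
  shows "block_word n k bs ! i < k \<and> Suc i \<in> bs ! (block_word n k bs ! i)"
  unfolding block_word_def
  using assms(2) theI'[OF ordered_partition_unique_block[OF assms(1)]] by simp

lemma block_word_nth_eq:
  assumes "ordered_partition n k bs" "i < n" "j < k" "Suc i \<in> bs ! j"
  shows "block_word n k bs ! i = j"
  using assms block_word_nth ordered_partition_unique_block[OF assms(1), of "Suc i"] by auto

lemma ordered_partition_mem_block:
  assumes "ordered_partition n k bs" "j < k" "m \<in> bs ! j"
  shows "\<exists>i<n. m = Suc i \<and> block_word n k bs ! i = j"
proof -
  have "m \<in> {1..n}"
    using ordered_partition_block_subset[OF assms(1,2)] assms(3) by blast
  then obtain i where "m = Suc i" "i < n"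
    by (cases m) auto
  with assms show ?thesis
    using block_word_nth_eq by blast
qed

lemma blocks_block_word:
  assumes "ordered_partition n k bs"
  shows "blocks k (block_word n k bs) = bs"
proof (rule nth_equalityI)
  show "length (blocks k (block_word n k bs)) = length bs"
    using assms by (simp add: ordered_partition_def)
  fix j assume "j < length (blocks k (block_word n k bs))"
  then have "j < k" by simp
  show "blocks k (block_word n k bs) ! j = bs ! j"
  proof (intro equalityI subsetI)
    fix m assume "m \<in> blocks k (block_word n k bs) ! j"
    then show "m \<in> bs ! j"
      using \<open>j < k\<close> block_word_nth[OF assms] by (auto simp: mem_blocks)
  next
    fix m assume "m \<in> bs ! j"
    then show "m \<in> blocks k (block_word n k bs) ! j"
      using \<open>j < k\<close> ordered_partition_mem_block[OF assms] by (simp add: mem_blocks)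
  qed
qed

lemma set_block_word:
  assumes "ordered_partition n k bs"
  shows "set (block_word n k bs) = {..<k}"
proof (intro equalityI subsetI)
  fix j assume "j \<in> set (block_word n k bs)"
  then show "j \<in> {..<k}"
    using block_word_nth[OF assms] by (auto simp: in_set_conv_nth)
next
  fix j assume "j \<in> {..<k}"
  then obtain m where "m \<in> bs ! j"
    using assms unfolding ordered_partition_def by blast
  then obtain i where "i < n" "block_word n k bs ! i = j"
    using \<open>j \<in> {..<k}\<close> ordered_partition_mem_block[OF assms] by blast
  then show "j \<in> set (block_word n k bs)"
    using nth_mem by fastforce
qed

lemma ordered_partitions_eq_image_blocks:
  "{bs. ordered_partition n k bs} = blocks k ` {w. length w = n \<and> set w = {..<k}}"
proof (intro equalityI subsetI)
  fix bs assume "bs \<in> {bs. ordered_partition n k bs}"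
  then have "bs = blocks k (block_word n k bs)" "set (block_word n k bs) = {..<k}"
    using blocks_block_word set_block_word by simp_all
  then show "bs \<in> blocks k ` {w. length w = n \<and> set w = {..<k}}"
    by (intro image_eqI[of _ _ "block_word n k bs"]) simp_all
qed (auto intro: ordered_partition_blocks)

lemma subseq_Cons_iff_nth:
  "subseq (x # xs) ys \<longleftrightarrow> (\<exists>i<length ys. ys ! i = x \<and> subseq xs (drop (Suc i) ys))"
proof (induction ys)
  case (Cons y ys)
  have split_first: "(\<exists>i<length (y # ys). (y # ys) ! i = x \<and> subseq xs (drop (Suc i) (y # ys))) \<longleftrightarrow>
      (y = x \<and> subseq xs ys) \<or> (\<exists>i<length ys. ys ! i = x \<and> subseq xs (drop (Suc i) ys))"
    by (simp add: Ex_less_Suc2)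
  show ?case
  proof (cases "x = y")
    case True
    have "subseq xs (drop (Suc i) ys) \<Longrightarrow> subseq xs ys" for i
      using list_emb_suffix suffix_drop by blast
    then show ?thesis
      unfolding split_first using True by auto
  next
    case False
    then show ?thesis
      unfolding split_first using Cons.IH by simp
  qed
qed simp

lemma subseq_three_iff_nth:
  "subseq [a, b, c] ys \<longleftrightarrow>
    (\<exists>i j l. i < j \<and> j < l \<and> l < length ys \<and> ys ! i = a \<and> ys ! j = b \<and> ys ! l = c)"
  (is "_ \<longleftrightarrow> ?positions")
proof
  assume "subseq [a, b, c] ys"
  then obtain i j l where "i < length ys" "ys ! i = a"
    "j < length (drop (Suc i) ys)" "drop (Suc i) ys ! j = b"
    "l < length (drop (Suc j) (drop (Suc i) ys))" "drop (Suc j) (drop (Suc i) ys) ! l = c"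
    unfolding subseq_Cons_iff_nth by blast
  then show ?positions
    by (intro exI[of _ i] exI[of _ "Suc i + j"] exI[of _ "Suc j + Suc i + l"]) simp
next
  assume ?positions
  then obtain i j l where "i < j" "j < l" "l < length ys" "ys ! i = a" "ys ! j = b" "ys ! l = c"
    by blast
  then show "subseq [a, b, c] ys"
    unfolding subseq_Cons_iff_nth
    by (intro exI[of _ i] conjI exI[of _ "j - Suc i"] exI[of _ "l - Suc j"]) auto
qed

lemma contains_pattern_132_iff:
  assumes "length bs = 3"
  shows "contains_pattern bs [1, 3, 2] \<longleftrightarrow>
    (\<exists>x\<in>bs ! 0. \<exists>y\<in>bs ! 1. \<exists>z\<in>bs ! 2. x < z \<and> z < y)"
proof
  assume "contains_pattern bs [1, 3, 2]"
  then obtain idx b :: "nat \<Rightarrow> nat" where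
    idx: "\<forall>a c. a < c \<and> c < length [1, 3, 2 :: nat] \<longrightarrow> idx a < idx c" and
    mem: "\<forall>a < length [1, 3, 2 :: nat]. idx a < length bs \<and> b a \<in> bs ! idx a" and
    iso: "\<forall>a < length [1, 3, 2 :: nat]. \<forall>c < length [1, 3, 2 :: nat].
      b a < b c \<longleftrightarrow> [1, 3, 2 :: nat] ! a < [1, 3, 2] ! c"
    unfolding contains_pattern_def by (elim exE conjE)
  have "idx 0 < idx 1" "idx 1 < idx 2" "idx 2 < 3"
    using idx mem assms by simp_all
  then have "idx 0 = 0" "idx 1 = 1" "idx 2 = 2"
    by linarith+
  moreover have "b 0 \<in> bs ! idx 0" "b 1 \<in> bs ! idx 1" "b 2 \<in> bs ! idx 2"
    using mem by simp_all
  moreover have "b 0 < b 2" "b 2 < b 1"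
    using iso by simp_all
  ultimately show "\<exists>x\<in>bs ! 0. \<exists>y\<in>bs ! 1. \<exists>z\<in>bs ! 2. x < z \<and> z < y"
    by auto
next
  assume "\<exists>x\<in>bs ! 0. \<exists>y\<in>bs ! 1. \<exists>z\<in>bs ! 2. x < z \<and> z < y"
  then obtain x y z where "x \<in> bs ! 0" "y \<in> bs ! 1" "z \<in> bs ! 2" "x < z" "z < y"
    by blast
  then show "contains_pattern bs [1, 3, 2]"
    unfolding contains_pattern_def using assms
    by - (rule exI[of _ id], rule exI[of _ "(!) [x, y, z]"],
      auto simp: less_Suc_eq numeral_3_eq_3 numeral_2_eq_2)
qed

lemma contains_pattern_132_blocks:
  "contains_pattern (blocks 3 w) [1, 3, 2] \<longleftrightarrow> subseq [0, 2, 1] w"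
  unfolding contains_pattern_132_iff[OF length_blocks] subseq_three_iff_nth
proof
  assume "\<exists>x\<in>blocks 3 w ! 0. \<exists>y\<in>blocks 3 w ! 1. \<exists>z\<in>blocks 3 w ! 2. x < z \<and> z < y"
  then obtain x y z where "x \<in> blocks 3 w ! 0" "y \<in> blocks 3 w ! 1" "z \<in> blocks 3 w ! 2"
    "x < z" "z < y"
    by blast
  then obtain i j l where "i < length w" "w ! i = 0" "j < length w" "w ! j = 2"
    "l < length w" "w ! l = 1" "i < j" "j < l"
    by (auto simp: mem_blocks)
  then show "\<exists>i j l. i < j \<and> j < l \<and> l < length w \<and> w ! i = 0 \<and> w ! j = 2 \<and> w ! l = 1"
    by blast
next
  assume "\<exists>i j l. i < j \<and> j < l \<and> l < length w \<and> w ! i = 0 \<and> w ! j = 2 \<and> w ! l = 1"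
  then obtain i j l where "i < j" "j < l" "l < length w" "w ! i = 0" "w ! j = 2" "w ! l = 1"
    by blast
  then have "Suc i \<in> blocks 3 w ! 0" "Suc l \<in> blocks 3 w ! 1" "Suc j \<in> blocks 3 w ! 2"
    by (auto simp: mem_blocks)
  with \<open>i < j\<close> \<open>j < l\<close>
  show "\<exists>x\<in>blocks 3 w ! 0. \<exists>y\<in>blocks 3 w ! 1. \<exists>z\<in>blocks 3 w ! 2. x < z \<and> z < y"
    by blast
qed

lemma lessThan_3_nat: "{..<3 :: nat} = {0, 1, 2}"
  by auto

lemma ordered_partitions_avoiding_132:
  "{bs. ordered_partition n 3 bs \<and> \<not> contains_pattern bs [1, 3, 2]} =
    blocks 3 ` {w \<in> avoiders {0, 1, 2 :: nat} [0, 2, 1] n. set w = {0, 1, 2}}"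
proof -
  have "{bs. ordered_partition n 3 bs \<and> \<not> contains_pattern bs [1, 3, 2]} =
      {bs \<in> {bs. ordered_partition n 3 bs}. \<not> contains_pattern bs [1, 3, 2]}"
    by simp
  also have "\<dots> = blocks 3 ` {w \<in> {w. length w = n \<and> set w = {..<3}}. \<not> contains_pattern (blocks 3 w) [1, 3, 2]}"
    unfolding ordered_partitions_eq_image_blocks by (rule Compr_image_eq)
  also have "{w \<in> {w. length w = n \<and> set w = {..<3}}. \<not> contains_pattern (blocks 3 w) [1, 3, 2]} =
      {w \<in> avoiders {0, 1, 2 :: nat} [0, 2, 1] n. set w = {0, 1, 2}}"
    unfolding contains_pattern_132_blocks lessThan_3_nat avoiders_def words_def by auto
  finally show ?thesis .
qed

lemma op_count_132_3:
  "op_count n 3 [1, 3, 2] = card {w \<in> avoiders {0, 1, 2 :: nat} [0, 2, 1] n. set w = {0, 1, 2}}"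
  unfolding op_count_def ordered_partitions_avoiding_132
proof (rule card_image, rule inj_on_subset[OF inj_on_blocks])
  show "{w \<in> avoiders {0, 1, 2 :: nat} [0, 2, 1] n. set w = {0, 1, 2}} \<subseteq> words {..<3} n"
    by (auto simp: avoiders_def lessThan_3_nat)
qed

theorem theorem3:
  fixes n :: nat
  assumes "n \<ge> 1"
  shows "real (op_count n 3 [1, 3, 2]) = ((real n)^2 / 8 + 3 * real n / 8 - 2) * 2 ^ n + 3"
proof -
  let ?a = "card (avoiders {0, 1, 2 :: nat} [0, 2, 1] n)"
  have "op_count n 3 [1, 3, 2] + 3 * 2 ^ n = ?a + 3"
    unfolding op_count_132_3 by (rule card_surjective_avoiders_021[OF assms])
  from arg_cong[OF this, of real]
  have "real (op_count n 3 [1, 3, 2]) + 3 * 2 ^ n = real ?a + 3"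
    by simp
  moreover have "8 * real ?a = 2 ^ n * ((real n)^2 + 3 * real n + 8)"
    using arg_cong[OF card_avoiders_021[of n], of real] by simp
  ultimately show ?thesis
    by (simp add: algebra_simps)
qed

end
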